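(* Let $n$ be a positive even integer. Then $\mathrm{VR}(T_{n,n};\operatorname{diam}(T_{n,n})-1)\simeq S^{\frac{n^2}{2}-1}$.
   Context: For a metric space $X$ and $r\ge 0$, $\mathrm{VR}(X;r)$ is the simplicial complex on vertex set $X$ whose simplices are the finite nonempty subsets of diameter at most $r$. $T_{n,n}$ is the set $\{0,\dots,n-1\}^2$ with metric $d((i,j),(i',j'))=\min\{|i-i'|,n-|i-i'|\}+\min\{|j-j'|,n-|j-j'|\}$; $\operatorname{diam}(T_{n,n})$ is its diameter (equal to $n$ for even $n$). *)

theory Defs
  imports "HOL-Analysis.Analysis"
begin

text \<open>Cyclic distance on Z/n (for a, b < n).\<close>
definition cyc_dist :: "nat \<Rightarrow> nat \<Rightarrow> nat \<Rightarrow> nat" where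
  "cyc_dist n a b = min (if a \<le> b then b - a else a - b) (n - (if a \<le> b then b - a else a - b))"

definition torus_pts :: "nat \<Rightarrow> (nat \<times> nat) set" where
  "torus_pts n = {0..<n} \<times> {0..<n}"

definition torus_dist :: "nat \<Rightarrow> nat \<times> nat \<Rightarrow> nat \<times> nat \<Rightarrow> real" where
  "torus_dist n p q = real (cyc_dist n (fst p) (fst q) + cyc_dist n (snd p) (snd q))"

definition torus_diam :: "nat \<Rightarrow> real" where
  "torus_diam n = Sup {torus_dist n p q | p q. p \<in> torus_pts n \<and> q \<in> torus_pts n}"

definition VR :: "'a set \<Rightarrow> ('a \<Rightarrow> 'a \<Rightarrow> real) \<Rightarrow> real \<Rightarrow> 'a set set" where
  "VR X d r = {\<sigma>. \<sigma> \<subseteq> X \<and> finite \<sigma> \<and> \<sigma> \<noteq> {} \<and> (\<forall>x\<in>\<sigma>. \<forall>y\<in>\<sigma>. d x y \<le> r)}"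

text \<open>Geometric realization of a simplicial complex K (a set of finite nonempty
  vertex sets, closed under nonempty subsets): points are barycentric coordinate
  functions whose support is a simplex of K, topologized as a subspace of the
  product space of real-valued functions on the vertices.\<close>
definition realization :: "'a set set \<Rightarrow> ('a \<Rightarrow> real) topology" where
  "realization K = subtopology (powertop_real UNIV)
     {x. (\<forall>v. 0 \<le> x v) \<and> {v. x v \<noteq> 0} \<in> K \<and> sum x {v. x v \<noteq> 0} = 1}"

end

(*
  For n = 2m the torus distance never exceeds n, and it equals n exactly between a point and
  its antipode, the point shifted by m in both coordinates. So at scale n - 1 the
  Vietoris-Rips complex consists of the nonempty vertex sets containing no antipodal pair:
  it is the boundary of the cross-polytope on the n^2/2 antipodal pairs. A point of its
  realization is determined by the differences of the weights within each pair, which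
  identifies the realization with the unit l1-sphere; radial rescaling carries that onto
  the round sphere.
*)
theory Submission
  imports Defs
begin

lemma homeomorphic_space_powertop_subspaces:
  fixes f :: "('a \<Rightarrow> real) \<Rightarrow> 'b \<Rightarrow> real" and g :: "('b \<Rightarrow> real) \<Rightarrow> 'a \<Rightarrow> real"
  assumes "f \<in> S \<rightarrow> T" and "g \<in> T \<rightarrow> S"
    and "\<And>x. x \<in> S \<Longrightarrow> g (f x) = x" and "\<And>y. y \<in> T \<Longrightarrow> f (g y) = y"
    and "\<And>i. continuous_map (subtopology (powertop_real UNIV) S) euclideanreal (\<lambda>x. f x i)"
    and "\<And>j. continuous_map (subtopology (powertop_real UNIV) T) euclideanreal (\<lambda>y. g y j)"
  shows "subtopology (powertop_real UNIV) S homeomorphic_space subtopology (powertop_real UNIV) T"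
proof -
  have "homeomorphic_maps (subtopology (powertop_real UNIV) S) (subtopology (powertop_real UNIV) T) f g"
    using assms by (auto simp: homeomorphic_maps_def continuous_map_in_subtopology
        continuous_map_componentwise_UNIV)
  then show ?thesis
    unfolding homeomorphic_space_def by blast
qed

definition l1_sphere :: "nat \<Rightarrow> (nat \<Rightarrow> real) topology" where
  "l1_sphere n = subtopology (powertop_real UNIV) {x. (\<Sum>i\<le>n. \<bar>x i\<bar>) = 1 \<and> (\<forall>i>n. x i = 0)}"

lemma l1_sphere_homeomorphic_nsphere: "l1_sphere n homeomorphic_space nsphere n"
proof -
  define S where "S = {x::nat \<Rightarrow> real. (\<Sum>i\<le>n. \<bar>x i\<bar>) = 1 \<and> (\<forall>i>n. x i = 0)}"
  define T where "T = {x::nat \<Rightarrow> real. (\<Sum>i\<le>n. x i ^ 2) = 1 \<and> (\<forall>i>n. x i = 0)}"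
  define l1 where "l1 x = (\<Sum>i\<le>n. \<bar>x i\<bar>)" for x :: "nat \<Rightarrow> real"
  define l2 where "l2 x = sqrt (\<Sum>i\<le>n. x i ^ 2)" for x :: "nat \<Rightarrow> real"
  have l1_pos: "l1 x > 0" and l2_pos: "l2 x > 0" if x: "x \<in> S \<union> T" for x
  proof -
    have "\<not> (\<forall>k\<le>n. x k = 0)"
    proof
      assume "\<forall>k\<le>n. x k = 0"
      then have "(\<Sum>i\<le>n. \<bar>x i\<bar>) = 0" "(\<Sum>i\<le>n. x i ^ 2) = 0"
        by simp_all
      with x show False
        by (auto simp: S_def T_def)
    qed
    then obtain k where "k \<le> n" "x k \<noteq> 0"
      by blast
    then show "l1 x > 0" "l2 x > 0"
      unfolding l1_def l2_def by (auto intro!: sum_pos2[of _ k])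
  qed
  have l1_scale: "l1 (\<lambda>i. x i / c) = l1 x / c" and l2_scale: "l2 (\<lambda>i. x i / c) = l2 x / c"
    if "c > 0" for x c
    using that by (simp_all add: l1_def l2_def abs_divide power_divide
        flip: sum_divide_distrib add: real_sqrt_divide)
  have l1_S: "l1 x = 1" if "x \<in> S" for x using that by (simp add: S_def l1_def)
  have l2_T: "l2 x = 1" if "x \<in> T" for x using that by (simp add: T_def l2_def)
  have "subtopology (powertop_real UNIV) S homeomorphic_space subtopology (powertop_real UNIV) T"
  proof (rule homeomorphic_space_powertop_subspaces
      [where f = "\<lambda>x i. x i / l2 x" and g = "\<lambda>y i. y i / l1 y"])
    show "(\<lambda>x i. x i / l2 x) \<in> S \<rightarrow> T"
    proof
      fix x assume x: "x \<in> S"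
      have "l2 x > 0"
        using x l2_pos by blast
      then have "l2 (\<lambda>i. x i / l2 x) = 1"
        by (simp add: l2_scale)
      then show "(\<lambda>i. x i / l2 x) \<in> T"
        using x by (simp add: T_def S_def l2_def)
    qed
    show "(\<lambda>y i. y i / l1 y) \<in> T \<rightarrow> S"
    proof
      fix y assume y: "y \<in> T"
      have "l1 y > 0"
        using y l1_pos by blast
      then have "l1 (\<lambda>i. y i / l1 y) = 1"
        by (simp add: l1_scale)
      then show "(\<lambda>i. y i / l1 y) \<in> S"
        using y by (simp add: T_def S_def l1_def)
    qed
    show "(\<lambda>i. x i / l2 x / l1 (\<lambda>i. x i / l2 x)) = x" if "x \<in> S" for x
      using that l1_S l2_pos[of x] by (simp add: l1_scale)
    show "(\<lambda>i. y i / l1 y / l2 (\<lambda>i. y i / l1 y)) = y" if "y \<in> T" for y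
      using that l2_T l1_pos[of y] by (simp add: l2_scale)
    show "continuous_map (subtopology (powertop_real UNIV) S) euclideanreal (\<lambda>x. x i / l2 x)" for i
      unfolding l2_def by (intro continuous_intros) (use l2_pos in \<open>fastforce simp: l2_def\<close>)+
    show "continuous_map (subtopology (powertop_real UNIV) T) euclideanreal (\<lambda>y. y i / l1 y)" for i
      unfolding l1_def by (intro continuous_intros) (use l1_pos in \<open>fastforce simp: l1_def\<close>)+
  qed
  then show ?thesis
    by (simp add: l1_sphere_def nsphere S_def T_def)
qed

(* The boundary complex of the cross-polytope conv {+e_k, -e_k | k < N}, with vertex p k
   standing for +e_k and q k for -e_k. *)
definition cross_polytope_boundary :: "(nat \<Rightarrow> 'a) \<Rightarrow> (nat \<Rightarrow> 'a) \<Rightarrow> nat \<Rightarrow> 'a set set" where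
  "cross_polytope_boundary p q N =
     {\<sigma>. \<sigma> \<subseteq> p ` {..<N} \<union> q ` {..<N} \<and> finite \<sigma> \<and> \<sigma> \<noteq> {} \<and> (\<forall>k<N. \<not> (p k \<in> \<sigma> \<and> q k \<in> \<sigma>))}"

lemma cross_polytope_boundary_eq_antipode_free:
  assumes vertices: "p ` {..<N} \<union> q ` {..<N} = X"
    and involution: "\<And>x. x \<in> X \<Longrightarrow> a (a x) = x"
    and partner: "\<And>k. k < N \<Longrightarrow> q k = a (p k)"
  shows "cross_polytope_boundary p q N = {\<sigma>. \<sigma> \<subseteq> X \<and> finite \<sigma> \<and> \<sigma> \<noteq> {} \<and> (\<forall>x\<in>\<sigma>. a x \<notin> \<sigma>)}"
proof -
  have partner': "a (q k) = p k" if "k < N" for k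
  proof -
    have "p k \<in> X"
      using that vertices by blast
    then show ?thesis
      using partner[OF that] involution by simp
  qed
  have no_pair_iff: "(\<forall>k<N. \<not> (p k \<in> \<sigma> \<and> q k \<in> \<sigma>)) \<longleftrightarrow> (\<forall>x\<in>\<sigma>. a x \<notin> \<sigma>)" if "\<sigma> \<subseteq> X" for \<sigma>
  proof
    assume no_pair: "\<forall>k<N. \<not> (p k \<in> \<sigma> \<and> q k \<in> \<sigma>)"
    show "\<forall>x\<in>\<sigma>. a x \<notin> \<sigma>"
    proof (intro ballI notI)
      fix x assume "x \<in> \<sigma>" "a x \<in> \<sigma>"
      obtain k where "k < N" "x = p k \<or> x = q k"
        using \<open>x \<in> \<sigma>\<close> \<open>\<sigma> \<subseteq> X\<close> vertices by blast
      then show False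
        using no_pair partner partner' \<open>x \<in> \<sigma>\<close> \<open>a x \<in> \<sigma>\<close> by auto
    qed
  next
    assume "\<forall>x\<in>\<sigma>. a x \<notin> \<sigma>"
    then show "\<forall>k<N. \<not> (p k \<in> \<sigma> \<and> q k \<in> \<sigma>)"
      using partner by simp
  qed
  show ?thesis
    unfolding cross_polytope_boundary_def vertices
  proof (rule Collect_cong)
    show "(\<sigma> \<subseteq> X \<and> finite \<sigma> \<and> \<sigma> \<noteq> {} \<and> (\<forall>k<N. \<not> (p k \<in> \<sigma> \<and> q k \<in> \<sigma>))) \<longleftrightarrow>
        (\<sigma> \<subseteq> X \<and> finite \<sigma> \<and> \<sigma> \<noteq> {} \<and> (\<forall>x\<in>\<sigma>. a x \<notin> \<sigma>))" for \<sigma>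
      using no_pair_iff[of \<sigma>] by blast
  qed
qed

locale vertex_pairing =
  fixes p q :: "nat \<Rightarrow> 'a" and N :: nat
  assumes inj_p: "inj_on p {..<N}" and inj_q: "inj_on q {..<N}"
    and disjoint_pq: "p ` {..<N} \<inter> q ` {..<N} = {}"
begin

abbreviation vertices :: "'a set" where
  "vertices \<equiv> p ` {..<N} \<union> q ` {..<N}"

lemma sum_support_eq_sum_pairs:
  fixes y :: "'a \<Rightarrow> real"
  assumes "\<And>v. v \<notin> vertices \<Longrightarrow> y v = 0"
  shows "sum y {v. y v \<noteq> 0} = (\<Sum>k<N. y (p k) + y (q k))"
proof -
  have "sum y {v. y v \<noteq> 0} = sum y vertices"
    by (rule sum.mono_neutral_left) (use assms in auto)
  also have "\<dots> = sum y (p ` {..<N}) + sum y (q ` {..<N})"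
    by (rule sum.union_disjoint) (use disjoint_pq in auto)
  also have "\<dots> = (\<Sum>k<N. y (p k) + y (q k))"
    using inj_p inj_q by (simp add: sum.reindex sum.distrib)
  finally show ?thesis .
qed

lemma in_realization_cross_polytope_boundary_iff:
  "x \<in> topspace (realization (cross_polytope_boundary p q N)) \<longleftrightarrow>
     (\<forall>v. 0 \<le> x v) \<and> (\<forall>v. v \<notin> vertices \<longrightarrow> x v = 0) \<and>
     (\<forall>k<N. x (p k) = 0 \<or> x (q k) = 0) \<and> (\<Sum>k<N. x (p k) + x (q k)) = 1"
  (is "_ \<longleftrightarrow> ?nonneg \<and> ?outside \<and> ?pairs \<and> ?sum")
proof
  assume "x \<in> topspace (realization (cross_polytope_boundary p q N))"
  then have x: "?nonneg" "{v. x v \<noteq> 0} \<in> cross_polytope_boundary p q N"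
    "sum x {v. x v \<noteq> 0} = 1"
    by (simp_all add: realization_def)
  then have "?outside" "?pairs"
    by (auto simp: cross_polytope_boundary_def)
  moreover from \<open>?outside\<close> have "?sum"
    using x(3) sum_support_eq_sum_pairs by simp
  ultimately show "?nonneg \<and> ?outside \<and> ?pairs \<and> ?sum"
    using x(1) by blast
next
  assume x: "?nonneg \<and> ?outside \<and> ?pairs \<and> ?sum"
  then have sum1: "sum x {v. x v \<noteq> 0} = 1"
    using sum_support_eq_sum_pairs by simp
  then have "{v. x v \<noteq> 0} \<noteq> {}"
    by (metis sum.empty zero_neq_one)
  moreover have "{v. x v \<noteq> 0} \<subseteq> vertices"
    using x by blast
  ultimately have "{v. x v \<noteq> 0} \<in> cross_polytope_boundary p q N"
    using x by (auto simp: cross_polytope_boundary_def intro: finite_subset)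
  with x sum1 show "x \<in> topspace (realization (cross_polytope_boundary p q N))"
    by (simp add: realization_def)
qed

lemma realization_cross_polytope_boundary_homeomorphic_l1_sphere:
  assumes "0 < N"
  shows "realization (cross_polytope_boundary p q N) homeomorphic_space l1_sphere (N - 1)"
proof -
  define S where "S = topspace (realization (cross_polytope_boundary p q N))"
  define T where "T = {z::nat \<Rightarrow> real. (\<Sum>k\<le>N - 1. \<bar>z k\<bar>) = 1 \<and> (\<forall>k>N - 1. z k = 0)}"
  define f where "f x = (\<lambda>k. if k < N then x (p k) - x (q k) else 0)" for x :: "'a \<Rightarrow> real"
  define g where "g z = (\<lambda>v. if v \<in> p ` {..<N} then max (z (inv_into {..<N} p v)) 0
      else if v \<in> q ` {..<N} then max (- z (inv_into {..<N} q v)) 0 else 0)" for z :: "nat \<Rightarrow> real"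
  have below_N: "{..N - 1} = {..<N}"
    using assms by auto
  have T_iff: "z \<in> T \<longleftrightarrow> (\<Sum>k<N. \<bar>z k\<bar>) = 1 \<and> (\<forall>k\<ge>N. z k = 0)" for z
    unfolding T_def below_N using assms by auto
  have S_iff: "x \<in> S \<longleftrightarrow> (\<forall>v. 0 \<le> x v) \<and> (\<forall>v. v \<notin> vertices \<longrightarrow> x v = 0) \<and>
      (\<forall>k<N. x (p k) = 0 \<or> x (q k) = 0) \<and> (\<Sum>k<N. x (p k) + x (q k)) = 1" for x
    unfolding S_def by (rule in_realization_cross_polytope_boundary_iff)
  have g_p: "g z (p k) = max (z k) 0" and g_q: "g z (q k) = max (- z k) 0" if "k < N" for z k
    using that inj_p inj_q disjoint_pq by (auto simp: g_def)
  have f_S: "f x \<in> T" if "x \<in> S" for x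
  proof -
    have "\<bar>x (p k) - x (q k)\<bar> = x (p k) + x (q k)" if "k < N" for k
      using \<open>x \<in> S\<close> that unfolding S_iff by force
    then show ?thesis
      using that by (simp add: T_iff S_iff f_def)
  qed
  have g_T: "g z \<in> S" if "z \<in> T" for z
  proof -
    have "(\<Sum>k<N. g z (p k) + g z (q k)) = (\<Sum>k<N. \<bar>z k\<bar>)"
      by (rule sum.cong) (auto simp: g_p g_q)
    with that show ?thesis
      by (auto simp: S_iff T_iff g_p g_q) (auto simp: g_def)
  qed
  have "subtopology (powertop_real UNIV) S homeomorphic_space subtopology (powertop_real UNIV) T"
  proof (rule homeomorphic_space_powertop_subspaces[where f = f and g = g])
    show "f \<in> S \<rightarrow> T" and "g \<in> T \<rightarrow> S"
      using f_S g_T by blast+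
    show "g (f x) = x" if "x \<in> S" for x
    proof
      fix v
      show "g (f x) v = x v"
        using \<open>x \<in> S\<close> unfolding S_iff
        by (cases "v \<in> vertices") (force simp: g_p g_q f_def, simp add: g_def)
    qed
    show "f (g z) = z" if "z \<in> T" for z
    proof
      fix k
      show "f (g z) k = z k"
        using \<open>z \<in> T\<close> by (cases "k < N") (auto simp: f_def g_p g_q T_iff)
    qed
    show "continuous_map (subtopology (powertop_real UNIV) S) euclideanreal (\<lambda>x. f x k)" for k
      unfolding f_def by (intro continuous_intros) auto
    show "continuous_map (subtopology (powertop_real UNIV) T) euclideanreal (\<lambda>z. g z v)" for v
      unfolding g_def by (intro continuous_intros) auto
  qed
  then show ?thesis
    by (simp add: S_def T_def l1_sphere_def realization_def)
qed

lemma realization_cross_polytope_boundary_homeomorphic_nsphere: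
  assumes "0 < N"
  shows "realization (cross_polytope_boundary p q N) homeomorphic_space nsphere (N - 1)"
  using realization_cross_polytope_boundary_homeomorphic_l1_sphere[OF assms]
    l1_sphere_homeomorphic_nsphere by (rule homeomorphic_space_trans)

end

lemma add_half_mod:
  "(a::nat) < 2 * m \<Longrightarrow> (a + m) mod (2 * m) = (if a < m then a + m else a - m)"
  by (simp add: mod_if)

lemma cyc_dist_le_half: "a < 2 * m \<Longrightarrow> b < 2 * m \<Longrightarrow> cyc_dist (2 * m) a b \<le> m"
  unfolding cyc_dist_def by auto

lemma cyc_dist_eq_half_iff:
  "a < 2 * m \<Longrightarrow> b < 2 * m \<Longrightarrow> cyc_dist (2 * m) a b = m \<longleftrightarrow> b = (a + m) mod (2 * m)"
  unfolding cyc_dist_def add_half_mod by auto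

definition torus_antipode :: "nat \<Rightarrow> nat \<times> nat \<Rightarrow> nat \<times> nat" where
  "torus_antipode n u = ((fst u + n div 2) mod n, (snd u + n div 2) mod n)"

lemma torus_antipode_in_torus_pts: "0 < n \<Longrightarrow> torus_antipode n u \<in> torus_pts n"
  by (simp add: torus_antipode_def torus_pts_def)

lemma torus_antipode_antipode:
  "u \<in> torus_pts (2 * m) \<Longrightarrow> torus_antipode (2 * m) (torus_antipode (2 * m) u) = u"
  by (auto simp: torus_antipode_def torus_pts_def add_half_mod)

lemma torus_dist_le:
  assumes "u \<in> torus_pts (2 * m)" and "v \<in> torus_pts (2 * m)"
  shows "torus_dist (2 * m) u v \<le> 2 * m"
  using assms cyc_dist_le_half[of "fst u" m "fst v"] cyc_dist_le_half[of "snd u" m "snd v"]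
  by (auto simp: torus_dist_def torus_pts_def)

lemma torus_dist_eq_iff:
  assumes "u \<in> torus_pts (2 * m)" and "v \<in> torus_pts (2 * m)"
  shows "torus_dist (2 * m) u v = 2 * m \<longleftrightarrow> v = torus_antipode (2 * m) u"
  using assms cyc_dist_le_half[of "fst u" m "fst v"] cyc_dist_le_half[of "snd u" m "snd v"]
    cyc_dist_eq_half_iff[of "fst u" m "fst v"] cyc_dist_eq_half_iff[of "snd u" m "snd v"]
  by (cases u; cases v) (auto simp: torus_dist_def torus_pts_def torus_antipode_def)

lemma torus_diam_eq:
  assumes "0 < m"
  shows "torus_diam (2 * m) = 2 * m"
  unfolding torus_diam_def
proof (rule cSup_eq_maximum)
  have "(0, 0) \<in> torus_pts (2 * m)"
    using assms by (simp add: torus_pts_def)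
  moreover have "torus_antipode (2 * m) (0, 0) \<in> torus_pts (2 * m)"
    using assms by (simp add: torus_antipode_in_torus_pts)
  moreover have "torus_dist (2 * m) (0, 0) (torus_antipode (2 * m) (0, 0)) = 2 * m"
    using calculation torus_dist_eq_iff by blast
  ultimately show "real (2 * m) \<in> {torus_dist (2 * m) u v |u v. u \<in> torus_pts (2 * m) \<and> v \<in> torus_pts (2 * m)}"
    by (metis (mono_tags, lifting) mem_Collect_eq)
qed (use torus_dist_le in blast)

lemma torus_dist_below_diam_iff:
  assumes "u \<in> torus_pts (2 * m)" and "v \<in> torus_pts (2 * m)"
  shows "torus_dist (2 * m) u v \<le> real (2 * m) - 1 \<longleftrightarrow> v \<noteq> torus_antipode (2 * m) u"
proof -
  obtain d :: nat where d: "torus_dist (2 * m) u v = d"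
    unfolding torus_dist_def by blast
  have "d \<le> 2 * m"
    using torus_dist_le[OF assms] d of_nat_le_iff by metis
  have "real d \<le> real (2 * m) - 1 \<longleftrightarrow> real (Suc d) \<le> real (2 * m)"
    by linarith
  also have "\<dots> \<longleftrightarrow> d \<noteq> 2 * m"
    by (simp only: of_nat_le_iff) (use \<open>d \<le> 2 * m\<close> in arith)
  finally show ?thesis
    using torus_dist_eq_iff[OF assms] d of_nat_eq_iff by metis
qed

lemma VR_torus_below_diam:
  assumes "0 < m"
  shows "VR (torus_pts (2 * m)) (torus_dist (2 * m)) (torus_diam (2 * m) - 1) =
    {\<sigma>. \<sigma> \<subseteq> torus_pts (2 * m) \<and> finite \<sigma> \<and> \<sigma> \<noteq> {} \<and> (\<forall>u\<in>\<sigma>. torus_antipode (2 * m) u \<notin> \<sigma>)}"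
  unfolding VR_def torus_diam_eq[OF assms] using torus_dist_below_diam_iff by blast

definition row_major :: "nat \<Rightarrow> nat \<Rightarrow> nat \<times> nat" where
  "row_major n k = (k div n, k mod n)"

lemma inj_row_major: "inj (row_major n)"
  by (rule injI) (metis row_major_def div_mult_mod_eq prod.inject)

lemma row_major_image:
  assumes "0 < n"
  shows "row_major n ` {..<m * n} = {..<m} \<times> {..<n}"
proof
  show "row_major n ` {..<m * n} \<subseteq> {..<m} \<times> {..<n}"
    using assms by (auto simp: row_major_def less_mult_imp_div_less)
  show "{..<m} \<times> {..<n} \<subseteq> row_major n ` {..<m * n}"
  proof clarify
    fix i j assume "i < m" "j < n"
    have "i * n + j < Suc i * n"
      using \<open>j < n\<close> by simp
    also have "\<dots> \<le> m * n"
      by (rule mult_le_mono1) (use \<open>i < m\<close> in simp)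
    finally have "i * n + j < m * n" .
    moreover have "row_major n (i * n + j) = (i, j)"
      using \<open>j < n\<close> by (simp add: row_major_def)
    ultimately show "(i, j) \<in> row_major n ` {..<m * n}"
      by (metis image_eqI lessThan_iff)
  qed
qed

lemma torus_antipode_image_lower_half:
  "torus_antipode (2 * m) ` ({..<m} \<times> {..<2 * m}) = {m..<2 * m} \<times> {..<2 * m}"
proof
  show "torus_antipode (2 * m) ` ({..<m} \<times> {..<2 * m}) \<subseteq> {m..<2 * m} \<times> {..<2 * m}"
    by (auto simp: torus_antipode_def add_half_mod)
  show "{m..<2 * m} \<times> {..<2 * m} \<subseteq> torus_antipode (2 * m) ` ({..<m} \<times> {..<2 * m})"
  proof
    fix u assume u: "u \<in> {m..<2 * m} \<times> {..<2 * m}"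
    then have "u = torus_antipode (2 * m) (torus_antipode (2 * m) u)"
      by (simp add: torus_antipode_antipode torus_pts_def mem_Times_iff)
    moreover have "torus_antipode (2 * m) u \<in> {..<m} \<times> {..<2 * m}"
      using u by (auto simp: torus_antipode_def add_half_mod)
    ultimately show "u \<in> torus_antipode (2 * m) ` ({..<m} \<times> {..<2 * m})"
      by (rule image_eqI)
  qed
qed

lemma torus_pts_halves:
  "torus_pts (2 * m) = {..<m} \<times> {..<2 * m} \<union> {m..<2 * m} \<times> {..<2 * m}"
  by (auto simp: torus_pts_def)

lemma torus_pairing_images:
  assumes "0 < m"
  shows "row_major (2 * m) ` {..<m * (2 * m)} = {..<m} \<times> {..<2 * m}"
    and "(torus_antipode (2 * m) \<circ> row_major (2 * m)) ` {..<m * (2 * m)} = {m..<2 * m} \<times> {..<2 * m}"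
  using assms by (simp_all only: row_major_image image_comp[symmetric] torus_antipode_image_lower_half)

lemma vertex_pairing_torus:
  assumes "0 < m"
  shows "vertex_pairing (row_major (2 * m)) (torus_antipode (2 * m) \<circ> row_major (2 * m)) (m * (2 * m))"
proof
  show inj_p: "inj_on (row_major (2 * m)) {..<m * (2 * m)}"
    using inj_row_major by (rule inj_on_subset) simp
  have "inj_on (torus_antipode (2 * m)) (torus_pts (2 * m))"
    by (rule inj_on_inverseI) (rule torus_antipode_antipode)
  then have "inj_on (torus_antipode (2 * m)) (row_major (2 * m) ` {..<m * (2 * m)})"
    by (rule inj_on_subset) (simp add: torus_pairing_images(1)[OF assms] torus_pts_halves)
  with inj_p show "inj_on (torus_antipode (2 * m) \<circ> row_major (2 * m)) {..<m * (2 * m)}"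
    by (rule comp_inj_on)
  show "row_major (2 * m) ` {..<m * (2 * m)} \<inter>
      (torus_antipode (2 * m) \<circ> row_major (2 * m)) ` {..<m * (2 * m)} = {}"
    unfolding torus_pairing_images[OF assms] by auto
qed

lemma VR_torus_eq_cross_polytope_boundary:
  assumes "0 < m"
  shows "VR (torus_pts (2 * m)) (torus_dist (2 * m)) (torus_diam (2 * m) - 1) =
    cross_polytope_boundary (row_major (2 * m)) (torus_antipode (2 * m) \<circ> row_major (2 * m)) (m * (2 * m))"
proof -
  have "row_major (2 * m) ` {..<m * (2 * m)} \<union>
      (torus_antipode (2 * m) \<circ> row_major (2 * m)) ` {..<m * (2 * m)} = torus_pts (2 * m)"
    unfolding torus_pairing_images[OF assms] torus_pts_halves ..
  from cross_polytope_boundary_eq_antipode_free[OF this torus_antipode_antipode comp_apply]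
  show ?thesis
    unfolding VR_torus_below_diam[OF assms] by (rule sym)
qed

theorem corollary6p3:
  fixes n :: nat
  assumes "0 < n" and "even n"
  shows "realization (VR (torus_pts n) (torus_dist n) (torus_diam n - 1))
           homotopy_equivalent_space nsphere (n^2 div 2 - 1)"
proof -
  obtain m where n: "n = 2 * m"
    using assms(2) by blast
  with assms(1) have "0 < m"
    by simp
  interpret vertex_pairing "row_major n" "torus_antipode n \<circ> row_major n" "m * n"
    using vertex_pairing_torus[OF \<open>0 < m\<close>] n by simp
  have "realization (VR (torus_pts n) (torus_dist n) (torus_diam n - 1))
      homeomorphic_space nsphere (m * n - 1)"
    using VR_torus_eq_cross_polytope_boundary[OF \<open>0 < m\<close>] \<open>0 < m\<close> n
      realization_cross_polytope_boundary_homeomorphic_nsphere by simp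
  moreover have "m * n = n^2 div 2"
    using n by (simp add: power2_eq_square)
  ultimately show ?thesis
    by (simp add: homeomorphic_imp_homotopy_equivalent_space)
qed

end
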